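(* Let $f\colon\mathbb{Z}_p^r\to\mathbb{Z}_p$ be a continuous function. Suppose that for every $z\in\mathbb{Z}_p$ there exist $\overline{x},\overline{y}\in\mathbb{Z}_p^r$ with $f(\overline{y})\neq 0$ and $f(\overline{x})/f(\overline{y})=z$. Then $R(f)$ is dense in $\mathbb{Q}_p$.
   Context: For a function $f$ on $\mathbb{Z}_p^r$, $R(f)=\{f(\overline{x})/f(\overline{y}) : \overline{x},\overline{y}\in\mathbb{Z}^r,\ f(\overline{y})\neq 0\}$; density is in the $p$-adic topology. *)

theory Defs
  imports Complex_Main "HOL-Computational_Algebra.Primes"
begin

text \<open>p-adic integers, realised as the inverse limit of the rings Z/p^n Z:
  a p-adic integer is a coherent sequence of residues a n in [0, p^n) with
  a (n+1) mod p^n = a n.\<close>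

type_synonym padic = "nat \<Rightarrow> int"

definition Zp :: "int \<Rightarrow> padic set" where
  "Zp p = {a. (\<forall>n. 0 \<le> a n \<and> a n < p ^ n) \<and> (\<forall>n. a (Suc n) mod p ^ n = a n)}"

definition padic_zero :: "padic" where
  "padic_zero = (\<lambda>n. 0)"

definition padic_of_int :: "int \<Rightarrow> int \<Rightarrow> padic" where
  "padic_of_int p k = (\<lambda>n. k mod p ^ n)"

definition padic_add :: "int \<Rightarrow> padic \<Rightarrow> padic \<Rightarrow> padic" where
  "padic_add p a b = (\<lambda>n. (a n + b n) mod p ^ n)"

definition padic_sub :: "int \<Rightarrow> padic \<Rightarrow> padic \<Rightarrow> padic" where
  "padic_sub p a b = (\<lambda>n. (a n - b n) mod p ^ n)"

definition padic_mult :: "int \<Rightarrow> padic \<Rightarrow> padic \<Rightarrow> padic" where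
  "padic_mult p a b = (\<lambda>n. (a n * b n) mod p ^ n)"

definition padic_val :: "padic \<Rightarrow> nat" where
  "padic_val a = (LEAST n. a (Suc n) \<noteq> 0)"

definition padic_norm :: "int \<Rightarrow> padic \<Rightarrow> real" where
  "padic_norm p a = (if a = padic_zero then 0 else real_of_int p powr (- real (padic_val a)))"

definition Zp_pow :: "int \<Rightarrow> nat \<Rightarrow> padic list set" where
  "Zp_pow p r = {xs. length xs = r \<and> set xs \<subseteq> Zp p}"

definition int_point :: "int \<Rightarrow> int list \<Rightarrow> padic list" where
  "int_point p xs = map (padic_of_int p) xs"

definition padic_continuous :: "int \<Rightarrow> nat \<Rightarrow> (padic list \<Rightarrow> padic) \<Rightarrow> bool" where
  "padic_continuous p r f \<longleftrightarrow>
     (\<forall>x \<in> Zp_pow p r. \<forall>e > 0. \<exists>d > 0. \<forall>y \<in> Zp_pow p r.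
        (\<forall>i < r. padic_norm p (padic_sub p (y ! i) (x ! i)) < d) \<longrightarrow>
        padic_norm p (padic_sub p (f y) (f x)) < e)"

text \<open>Q_p is the fraction field of Z_p: an element is a fraction a/b with a, b in Z_p, b \<noteq> 0.
  Two fractions are equal iff a*d = c*b, and |a/b - c/d|_p = |a d - c b|_p / (|b|_p |d|_p).\<close>

definition Qp_frac :: "int \<Rightarrow> (padic \<times> padic) set" where
  "Qp_frac p = {(a, b). a \<in> Zp p \<and> b \<in> Zp p \<and> b \<noteq> padic_zero}"

definition frac_eq :: "int \<Rightarrow> padic \<times> padic \<Rightarrow> padic \<times> padic \<Rightarrow> bool" where
  "frac_eq p q s \<longleftrightarrow> padic_mult p (fst q) (snd s) = padic_mult p (fst s) (snd q)"

definition frac_dist :: "int \<Rightarrow> padic \<times> padic \<Rightarrow> padic \<times> padic \<Rightarrow> real" where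
  "frac_dist p q s =
     padic_norm p (padic_sub p (padic_mult p (fst q) (snd s)) (padic_mult p (fst s) (snd q)))
     / (padic_norm p (snd q) * padic_norm p (snd s))"

definition R_set :: "int \<Rightarrow> nat \<Rightarrow> (padic list \<Rightarrow> padic) \<Rightarrow> (padic \<times> padic) set" where
  "R_set p r f = {(f (int_point p xs), f (int_point p ys)) | xs ys.
                   length xs = r \<and> length ys = r \<and> f (int_point p ys) \<noteq> padic_zero}"

definition dense_in_Qp :: "int \<Rightarrow> (padic \<times> padic) set \<Rightarrow> bool" where
  "dense_in_Qp p S \<longleftrightarrow> (\<forall>q \<in> Qp_frac p. \<forall>e > 0. \<exists>s \<in> S. frac_dist p s q < e)"

end

theory Submission
  imports Defs "HOL-Number_Theory.Cong"
begin

text \<open>Every element of Q_p is z or 1/z with z in Z_p, so the hypothesis makes every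
  a/b in Q_p an exact ratio f(x)/f(y) with x, y in Z_p^r. Since Z^r is dense in Z_p^r and
  f is continuous, x and y can be replaced by integer points at which f agrees with f(x)
  and f(y) modulo p^L; once L exceeds the valuation of f(y), the ratio moves by at most
  p^-L / (|f(y)|_p |b|_p).\<close>

lemma Zp_mod_power:
  assumes "a \<in> Zp p" "k \<le> n"
  shows "a n mod p ^ k = a k"
  using assms(2)
proof (induction n rule: dec_induct)
  case base
  then show ?case using assms(1) by (simp add: Zp_def)
next
  case (step n)
  have "a (Suc n) mod p ^ k = (a (Suc n) mod p ^ n) mod p ^ k"
    using step(1) by (simp add: mod_mod_cancel le_imp_power_dvd)
  also have "\<dots> = a k"
    using assms(1) step(3) by (simp add: Zp_def)
  finally show ?case .
qed

lemma Zp_cong: "a \<in> Zp p \<Longrightarrow> k \<le> n \<Longrightarrow> [a n = a k] (mod p ^ k)"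
  unfolding cong_def using Zp_mod_power[of a p k n] Zp_mod_power[of a p k k] by simp

lemma Zp_dvd_iff: "a \<in> Zp p \<Longrightarrow> k \<le> n \<Longrightarrow> p ^ k dvd a n \<longleftrightarrow> a k = 0"
  using Zp_mod_power[of a p k n] by (simp add: mod_eq_0_iff_dvd[symmetric])

lemma Zp_eq_below: "a \<in> Zp p \<Longrightarrow> b \<in> Zp p \<Longrightarrow> a n = b n \<Longrightarrow> k \<le> n \<Longrightarrow> a k = b k"
  using Zp_mod_power[of a p k n] Zp_mod_power[of b p k n] by simp

lemma Zp_zero_at_0: "a \<in> Zp p \<Longrightarrow> a 0 = 0"
  using Zp_mod_power[of a p 0 0] by simp

lemma Zp_eq_0_iff_le_val:
  assumes c: "c \<in> Zp p" "c \<noteq> padic_zero"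
  shows "c k = 0 \<longleftrightarrow> k \<le> padic_val c"
proof -
  have "\<exists>m. c (Suc m) \<noteq> 0"
    using c Zp_zero_at_0[OF c(1)] by (metis not0_implies_Suc padic_zero_def ext)
  then have nonzero: "c (Suc (padic_val c)) \<noteq> 0"
    unfolding padic_val_def by (rule LeastI_ex)
  have below: "m < padic_val c \<Longrightarrow> c (Suc m) = 0" for m
    unfolding padic_val_def using not_less_Least by blast
  show ?thesis
  proof
    assume "c k = 0"
    then show "k \<le> padic_val c"
      using nonzero Zp_mod_power[OF c(1), of "Suc (padic_val c)" k] by (cases "Suc (padic_val c) \<le> k") auto
  next
    assume "k \<le> padic_val c"
    then show "c k = 0"
      using below Zp_zero_at_0[OF c(1)] by (cases k) auto
  qed
qed

lemma Zp_val_split: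
  assumes "c \<in> Zp p" "c \<noteq> padic_zero" "padic_val c < n"
  obtains w where "c n = p ^ padic_val c * w" "\<not> p dvd w"
proof -
  have "p ^ padic_val c dvd c n"
    using assms by (simp add: Zp_dvd_iff Zp_eq_0_iff_le_val)
  moreover have "\<not> p ^ Suc (padic_val c) dvd c n"
    using assms Zp_dvd_iff[of c p "Suc (padic_val c)" n] by (simp add: Zp_eq_0_iff_le_val)
  ultimately show ?thesis
    using that by (auto simp: power_Suc2 elim!: dvdE)
qed

lemma Zp_val_factor:
  assumes "prime p" "c \<in> Zp p" "c \<noteq> padic_zero"
  obtains w where "c (n + padic_val c) = p ^ padic_val c * w" "coprime w (p ^ n)"
proof (cases n)
  case 0
  then show ?thesis
    using that[of 0] assms by (simp add: Zp_eq_0_iff_le_val)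
next
  case (Suc m)
  then obtain w where "c (n + padic_val c) = p ^ padic_val c * w" "\<not> p dvd w"
    using Zp_val_split[OF assms(2,3), of "n + padic_val c"] Suc by auto
  then show ?thesis
    using that assms(1) Suc by (simp add: prime_imp_coprime coprime_commute)
qed

lemma padic_of_int_in_Zp: "p > 0 \<Longrightarrow> padic_of_int p k \<in> Zp p"
  by (simp add: Zp_def padic_of_int_def mod_mod_cancel)

lemma padic_sub_in_Zp:
  assumes "p > 0" "a \<in> Zp p" "b \<in> Zp p"
  shows "padic_sub p a b \<in> Zp p"
proof -
  have "(a (Suc n) - b (Suc n)) mod p ^ Suc n mod p ^ n = (a n - b n) mod p ^ n" for n
  proof -
    have "(a (Suc n) - b (Suc n)) mod p ^ Suc n mod p ^ n
        = (a (Suc n) mod p ^ n - b (Suc n) mod p ^ n) mod p ^ n"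
      by (simp add: mod_mod_cancel mod_diff_eq)
    then show ?thesis
      using assms(2,3) by (simp add: Zp_def)
  qed
  then show ?thesis
    using assms(1) by (simp add: Zp_def padic_sub_def)
qed

lemma padic_mult_in_Zp:
  assumes "p > 0" "a \<in> Zp p" "b \<in> Zp p"
  shows "padic_mult p a b \<in> Zp p"
proof -
  have "a (Suc n) * b (Suc n) mod p ^ Suc n mod p ^ n = a n * b n mod p ^ n" for n
  proof -
    have "a (Suc n) * b (Suc n) mod p ^ Suc n mod p ^ n
        = (a (Suc n) mod p ^ n) * (b (Suc n) mod p ^ n) mod p ^ n"
      by (simp add: mod_mod_cancel mod_mult_eq)
    then show ?thesis
      using assms(2,3) by (simp add: Zp_def)
  qed
  then show ?thesis
    using assms(1) by (simp add: Zp_def padic_mult_def)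
qed

lemma padic_mult_commute: "padic_mult p a b = padic_mult p b a"
  by (simp add: padic_mult_def mult.commute)

lemma padic_mult_assoc: "padic_mult p (padic_mult p a b) c = padic_mult p a (padic_mult p b c)"
  by (simp add: padic_mult_def fun_eq_iff mod_mult_left_eq mod_mult_right_eq mult.assoc)

lemma padic_mult_left_commute: "padic_mult p a (padic_mult p b c) = padic_mult p b (padic_mult p a c)"
  by (metis padic_mult_assoc padic_mult_commute)

lemmas padic_mult_ac = padic_mult_assoc padic_mult_commute padic_mult_left_commute

lemma padic_mult_one_right: "a \<in> Zp p \<Longrightarrow> padic_mult p a (padic_of_int p 1) = a"
proof
  fix n
  assume "a \<in> Zp p"
  then have "a n mod p ^ n = a n"
    by (rule Zp_mod_power) simp
  then show "padic_mult p a (padic_of_int p 1) n = a n"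
    by (simp add: padic_mult_def padic_of_int_def mod_mult_right_eq)
qed

lemma padic_mult_zero_left: "padic_mult p padic_zero b = padic_zero"
  by (simp add: padic_mult_def padic_zero_def)

lemma padic_mult_neq_zero:
  assumes "prime p" "a \<in> Zp p" "b \<in> Zp p" "a \<noteq> padic_zero" "b \<noteq> padic_zero"
  shows "padic_mult p a b \<noteq> padic_zero"
proof
  define n where "n = Suc (padic_val a + padic_val b)"
  have "padic_val a < n" "padic_val b < n"
    by (simp_all add: n_def)
  then obtain u w where u: "a n = p ^ padic_val a * u" "\<not> p dvd u"
    and w: "b n = p ^ padic_val b * w" "\<not> p dvd w"
    by (metis Zp_val_split assms(2-5))
  have "\<not> p dvd u * w"
    using u(2) w(2) assms(1) by (simp add: prime_dvd_mult_iff)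
  then have "\<not> p ^ (padic_val a + padic_val b) * p dvd p ^ (padic_val a + padic_val b) * (u * w)"
    using assms(1) by (simp add: prime_gt_0_int)
  then have "\<not> p ^ n dvd a n * b n"
    using u(1) w(1) by (simp add: n_def power_add ac_simps)
  moreover assume "padic_mult p a b = padic_zero"
  then have "a n * b n mod p ^ n = 0"
    by (metis padic_mult_def padic_zero_def)
  ultimately show False
    by (simp add: mod_eq_0_iff_dvd)
qed

lemma Zp_limit_of_compatible_solutions:
  fixes P :: "nat \<Rightarrow> int \<Rightarrow> bool"
  assumes "p > 0"
    and solvable: "\<And>n. \<exists>c. P n c"
    and unique: "\<And>n c c'. P n c \<Longrightarrow> P n c' \<Longrightarrow> [c = c'] (mod p ^ n)"
    and compatible: "\<And>n c. P (Suc n) c \<Longrightarrow> P n c"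
  shows "\<exists>z \<in> Zp p. \<forall>n c. P n c \<longrightarrow> z n = c mod p ^ n"
proof
  define z where "z n = (SOME c. P n c) mod p ^ n" for n
  have P_some: "P n (SOME c. P n c)" for n
    using solvable by (rule someI_ex)
  show "\<forall>n c. P n c \<longrightarrow> z n = c mod p ^ n"
    using unique[OF P_some] by (simp add: z_def cong_def)
  have "z (Suc n) mod p ^ n = z n" for n
    using unique[OF compatible[OF P_some] P_some, of n]
    by (simp add: z_def cong_def mod_mod_cancel)
  then show "z \<in> Zp p"
    using \<open>p > 0\<close> by (simp add: Zp_def z_def)
qed

lemma Zp_level_quotient_exists:
  assumes "prime p" "a \<in> Zp p" "b \<in> Zp p" "b \<noteq> padic_zero" "a (padic_val b) = 0"
  shows "\<exists>c. [c * b (n + padic_val b) = a (n + padic_val b)] (mod p ^ (n + padic_val b))"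
proof -
  define j where "j = padic_val b"
  obtain w where w: "b (n + j) = p ^ j * w" "coprime w (p ^ n)"
    using Zp_val_factor[OF assms(1,3,4)] j_def by blast
  have "p ^ j dvd a (n + j)"
    using assms(2,5) by (simp add: Zp_dvd_iff j_def)
  then obtain a' where a': "a (n + j) = p ^ j * a'" ..
  obtain x where "[w * x = 1] (mod p ^ n)"
    using cong_solve_coprime_int[OF w(2)] by blast
  then have "[x * a' * w = a'] (mod p ^ n)"
    using cong_scalar_right[of "w * x" 1 "p ^ n" a'] by (simp add: ac_simps)
  then have "[p ^ j * (x * a' * w) = p ^ j * a'] (mod p ^ j * p ^ n)"
    by (rule cong_cmult_leftI)
  then have "[x * a' * b (n + j) = a (n + j)] (mod p ^ (n + j))"
    using w(1) a' by (simp add: power_add ac_simps)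
  then show ?thesis
    unfolding j_def ..
qed

lemma Zp_level_quotient_unique:
  assumes "prime p" "b \<in> Zp p" "b \<noteq> padic_zero"
    and "[c * b (n + padic_val b) = c' * b (n + padic_val b)] (mod p ^ (n + padic_val b))"
  shows "[c = c'] (mod p ^ n)"
proof -
  define j where "j = padic_val b"
  obtain w where w: "b (n + j) = p ^ j * w" "coprime w (p ^ n)"
    using Zp_val_factor[OF assms(1-3)] j_def by blast
  have "p ^ j * p ^ n dvd p ^ j * (c * w - c' * w)"
    using assms(4) w(1) by (simp add: j_def cong_iff_dvd_diff power_add algebra_simps)
  then have "[c * w = c' * w] (mod p ^ n)"
    using assms(1) by (simp add: cong_iff_dvd_diff prime_gt_0_int)
  then show ?thesis
    using w(2) by (simp add: cong_mult_rcancel)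
qed

lemma Zp_exists_quotient:
  assumes "prime p" "a \<in> Zp p" "b \<in> Zp p" "b \<noteq> padic_zero" "a (padic_val b) = 0"
  shows "\<exists>z \<in> Zp p. padic_mult p z b = a"
proof -
  define j where "j = padic_val b"
  \<comment> \<open>Dividing by \<open>b\<close> loses \<open>j\<close> digits: a solution at precision \<open>n + j\<close> is unique mod \<open>p ^ n\<close>.\<close>
  define P where "P n c \<longleftrightarrow> [c * b (n + j) = a (n + j)] (mod p ^ (n + j))" for n c
  have solvable: "\<exists>c. P n c" for n
    using Zp_level_quotient_exists[OF assms] by (simp add: P_def j_def)
  have unique: "[c = c'] (mod p ^ n)" if "P n c" "P n c'" for n c c'
    using that Zp_level_quotient_unique[OF assms(1,3,4)] unfolding P_def j_def
    by (meson cong_sym cong_trans)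
  have compatible: "P n c" if "P (Suc n) c" for n c
  proof -
    have "[c * b (Suc n + j) = a (Suc n + j)] (mod p ^ (n + j))"
      using that unfolding P_def by (rule cong_dvd_modulus) (simp add: le_imp_power_dvd)
    moreover have "[b (Suc n + j) = b (n + j)] (mod p ^ (n + j))"
      "[a (Suc n + j) = a (n + j)] (mod p ^ (n + j))"
      using assms(2,3) by (simp_all add: Zp_cong)
    ultimately show ?thesis
      unfolding P_def by (meson cong_scalar_left cong_sym cong_trans)
  qed
  obtain z where z: "z \<in> Zp p" and z_level: "\<And>n c. P n c \<Longrightarrow> z n = c mod p ^ n"
    using Zp_limit_of_compatible_solutions[of p P, OF _ solvable unique compatible] assms(1)
    by (auto simp: prime_gt_0_int)
  have "padic_mult p z b n = a n" for n
  proof -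
    obtain c where c: "P n c"
      using solvable by blast
    have "[c * b (n + j) = a (n + j)] (mod p ^ n)"
      using c unfolding P_def by (rule cong_dvd_modulus) (simp add: le_imp_power_dvd)
    moreover have "[b (n + j) = b n] (mod p ^ n)" "[a (n + j) = a n] (mod p ^ n)"
      using assms(2,3) by (simp_all add: Zp_cong)
    moreover have "[z n = c] (mod p ^ n)"
      using z_level[OF c] by (simp add: cong_def)
    ultimately have "[z n * b n = a n] (mod p ^ n)"
      by (meson cong_mult cong_sym cong_trans)
    then show ?thesis
      using Zp_mod_power[OF assms(2), of n n] by (simp add: padic_mult_def cong_def)
  qed
  then show ?thesis
    using z by blast
qed

lemma ratios_cover_Qp_if_cover_Zp:
  assumes "prime p" "S \<subseteq> Zp p"
    and Zp_covered: "\<forall>z \<in> Zp p. \<exists>u \<in> S. \<exists>v \<in> S.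
      v \<noteq> padic_zero \<and> frac_eq p (u, v) (z, padic_of_int p 1)"
    and "(a, b) \<in> Qp_frac p"
  shows "\<exists>u \<in> S. \<exists>v \<in> S. v \<noteq> padic_zero \<and> frac_eq p (u, v) (a, b)"
proof -
  have a: "a \<in> Zp p" and b: "b \<in> Zp p" "b \<noteq> padic_zero"
    using assms(4) by (auto simp: Qp_frac_def)
  have multiple: "\<exists>u \<in> S. \<exists>v \<in> S. v \<noteq> padic_zero \<and> u = padic_mult p z v" if z: "z \<in> Zp p" for z
  proof -
    obtain u v where "u \<in> S" "v \<in> S" "v \<noteq> padic_zero"
      and uv: "frac_eq p (u, v) (z, padic_of_int p 1)"
      using Zp_covered z by blast
    have "u \<in> Zp p"
      using \<open>u \<in> S\<close> assms(2) by blast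
    then have "u = padic_mult p u (padic_of_int p 1)"
      by (simp add: padic_mult_one_right)
    also have "\<dots> = padic_mult p z v"
      using uv by (simp add: frac_eq_def)
    finally show ?thesis
      using \<open>u \<in> S\<close> \<open>v \<in> S\<close> \<open>v \<noteq> padic_zero\<close> by blast
  qed
  show ?thesis
  proof (cases "a (padic_val b) = 0")
    case True
    then obtain z where "z \<in> Zp p" and z: "padic_mult p z b = a"
      using Zp_exists_quotient[OF assms(1) a b] by blast
    then obtain u v where "u \<in> S" "v \<in> S" "v \<noteq> padic_zero" and u: "u = padic_mult p z v"
      using multiple by blast
    moreover have "frac_eq p (u, v) (a, b)"
      unfolding frac_eq_def u z[symmetric] by (simp add: padic_mult_ac)
    ultimately show ?thesis
      by blast
  next
    case False
    then have "a \<noteq> padic_zero"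
      by (auto simp: padic_zero_def)
    then have "b (padic_val a) = 0"
      using False a b by (simp add: Zp_eq_0_iff_le_val)
    then obtain z where "z \<in> Zp p" and z: "padic_mult p z a = b"
      using Zp_exists_quotient[OF assms(1) b(1) a \<open>a \<noteq> padic_zero\<close>] by blast
    have "z \<noteq> padic_zero"
      using z b(2) by (auto simp: padic_mult_zero_left)
    obtain u v where "u \<in> S" "v \<in> S" "v \<noteq> padic_zero" and u: "u = padic_mult p z v"
      using multiple \<open>z \<in> Zp p\<close> by blast
    have "u \<noteq> padic_zero"
      unfolding u using \<open>v \<in> S\<close> assms(2)
      by (intro padic_mult_neq_zero[OF assms(1) \<open>z \<in> Zp p\<close> _ \<open>z \<noteq> padic_zero\<close> \<open>v \<noteq> padic_zero\<close>]) blast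
    moreover have "frac_eq p (v, u) (a, b)"
      unfolding frac_eq_def u z[symmetric] by (simp add: padic_mult_ac)
    ultimately show ?thesis
      using \<open>u \<in> S\<close> \<open>v \<in> S\<close> by blast
  qed
qed

lemma padic_sub_eq_0_iff:
  assumes "a \<in> Zp p" "b \<in> Zp p"
  shows "padic_sub p a b n = 0 \<longleftrightarrow> a n = b n"
  using Zp_mod_power[OF assms(1), of n n] Zp_mod_power[OF assms(2), of n n]
  by (simp add: padic_sub_def mod_eq_0_iff_dvd mod_eq_dvd_iff[symmetric])

lemma padic_norm_le_iff:
  assumes "p > 1" "c \<in> Zp p"
  shows "padic_norm p c \<le> real_of_int p powr - real L \<longleftrightarrow> c L = 0"
proof (cases "c = padic_zero")
  case True
  then show ?thesis
    by (simp add: padic_norm_def padic_zero_def)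
next
  case False
  then show ?thesis
    using assms by (simp add: padic_norm_def Zp_eq_0_iff_le_val)
qed

lemma padic_norm_sub_le_iff:
  assumes "p > 1" "a \<in> Zp p" "b \<in> Zp p"
  shows "padic_norm p (padic_sub p a b) \<le> real_of_int p powr - real L \<longleftrightarrow> a L = b L"
  using padic_norm_le_iff[OF assms(1) padic_sub_in_Zp[OF _ assms(2,3)]] assms
  by (simp add: padic_sub_eq_0_iff)

lemma Zp_agree_above_val:
  assumes "u \<in> Zp p" "v \<in> Zp p" "v \<noteq> padic_zero" "padic_val v < L" "u L = v L"
  shows "u \<noteq> padic_zero \<and> padic_val u = padic_val v"
proof -
  have agree: "u k = v k" if "k \<le> L" for k
    using Zp_eq_below[OF assms(1,2,5) that] .
  have "u L \<noteq> 0"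
    using assms by (simp add: Zp_eq_0_iff_le_val)
  then have u_nonzero: "u \<noteq> padic_zero"
    by (auto simp: padic_zero_def)
  have "u k = 0 \<longleftrightarrow> k \<le> padic_val v" if "k \<le> L" for k
    using agree[OF that] assms(2,3) by (simp add: Zp_eq_0_iff_le_val)
  then have "k \<le> padic_val u \<longleftrightarrow> k \<le> padic_val v" if "k \<le> L" for k
    using that assms(1) u_nonzero by (simp add: Zp_eq_0_iff_le_val)
  from this[of "padic_val v"] this[of "Suc (padic_val v)"] assms(4)
  have "padic_val u = padic_val v"
    by simp
  with u_nonzero show ?thesis ..
qed

lemma eventually_powr_neg_less:
  assumes "p > 1" "\<delta> > 0"
  shows "eventually (\<lambda>N. real_of_int p powr - real N < \<delta>) sequentially"
proof -
  have "(\<lambda>N. inverse (real_of_int p ^ N)) \<longlonglongrightarrow> 0"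
    using assms(1) by (intro LIMSEQ_inverse_realpow_zero) simp
  then have "eventually (\<lambda>N. inverse (real_of_int p ^ N) < \<delta>) sequentially"
    using assms(2) by (rule order_tendstoD)
  then show ?thesis
    using assms(1) by (simp add: powr_minus powr_realpow)
qed

lemma int_point_in_Zp_pow: "p > 0 \<Longrightarrow> int_point p X \<in> Zp_pow p (length X)"
  by (auto simp: int_point_def Zp_pow_def padic_of_int_in_Zp)

lemma int_point_truncation_close:
  assumes "p > 1" "x \<in> Zp_pow p r" "i < r"
  shows "padic_norm p (padic_sub p (int_point p (map (\<lambda>a. a N) x) ! i) (x ! i))
    \<le> real_of_int p powr - real N"
proof -
  have "x ! i \<in> Zp p" "length x = r"
    using assms(2,3) by (auto simp: Zp_pow_def)
  moreover have "int_point p (map (\<lambda>a. a N) x) ! i = padic_of_int p ((x ! i) N)"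
    using assms(3) \<open>length x = r\<close> by (simp add: int_point_def)
  moreover have "padic_of_int p ((x ! i) N) N = (x ! i) N"
    using Zp_mod_power[OF \<open>x ! i \<in> Zp p\<close>, of N N] by (simp add: padic_of_int_def)
  ultimately show ?thesis
    using assms(1) by (simp add: padic_norm_sub_le_iff padic_of_int_in_Zp)
qed

lemma continuous_agrees_at_int_point:
  assumes "p > 1" and cont: "padic_continuous p r f"
    and f_Zp: "\<forall>x \<in> Zp_pow p r. f x \<in> Zp p" and x: "x \<in> Zp_pow p r"
  shows "\<exists>X. length X = r \<and> f (int_point p X) L = f x L"
proof -
  have "real_of_int p powr - real L > 0"
    using \<open>p > 1\<close> by simp
  then obtain \<delta> where "\<delta> > 0" and \<delta>: "\<forall>y \<in> Zp_pow p r.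
      (\<forall>i < r. padic_norm p (padic_sub p (y ! i) (x ! i)) < \<delta>) \<longrightarrow>
      padic_norm p (padic_sub p (f y) (f x)) < real_of_int p powr - real L"
    using cont x unfolding padic_continuous_def by blast
  obtain N where N: "real_of_int p powr - real N < \<delta>"
    using eventually_powr_neg_less[OF \<open>p > 1\<close> \<open>\<delta> > 0\<close>] eventually_sequentially by auto
  define X where "X = map (\<lambda>a. a N) x"
  have "length X = r"
    using x by (simp add: X_def Zp_pow_def)
  then have X_Zp: "int_point p X \<in> Zp_pow p r"
    using int_point_in_Zp_pow[of p X] \<open>p > 1\<close> by simp
  have "\<forall>i < r. padic_norm p (padic_sub p (int_point p X ! i) (x ! i)) < \<delta>"
    using int_point_truncation_close[OF \<open>p > 1\<close> x] N unfolding X_def by (meson order.strict_trans1)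
  then have "padic_norm p (padic_sub p (f (int_point p X)) (f x)) \<le> real_of_int p powr - real L"
    using \<delta> X_Zp by (simp add: less_imp_le)
  then have "f (int_point p X) L = f x L"
    using padic_norm_sub_le_iff[OF \<open>p > 1\<close>] f_Zp X_Zp x by blast
  with \<open>length X = r\<close> show ?thesis
    by blast
qed

lemma frac_dist_le_if_agree:
  assumes "p > 1" "a \<in> Zp p" "b \<in> Zp p" "d \<in> Zp p" "c' \<in> Zp p" "d' \<in> Zp p"
    and "b \<noteq> padic_zero" "d \<noteq> padic_zero" "frac_eq p (c, d) (a, b)"
    and "c' L = c L" "d' L = d L" "padic_val d < L"
  shows "d' \<noteq> padic_zero \<and>
    frac_dist p (c', d') (a, b) \<le> real_of_int p powr - real L / (padic_norm p d * padic_norm p b)"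
proof -
  have d': "d' \<noteq> padic_zero" "padic_norm p d' = padic_norm p d"
    using Zp_agree_above_val[OF assms(6,4,8,12,11)] assms(8) by (simp_all add: padic_norm_def)
  have "padic_mult p c b L = padic_mult p a d L"
    using assms(9) by (simp add: frac_eq_def)
  then have "padic_mult p c' b L = padic_mult p a d' L"
    using assms(10,11) by (simp add: padic_mult_def)
  then have numerator: "padic_norm p (padic_sub p (padic_mult p c' b) (padic_mult p a d'))
      \<le> real_of_int p powr - real L"
    using assms(1-3,5,6) by (simp add: padic_norm_sub_le_iff padic_mult_in_Zp)
  have "padic_norm p d' * padic_norm p b > 0"
    using assms(1,7) d'(1) by (simp add: padic_norm_def)
  then show ?thesis
    using d' numerator by (simp add: frac_dist_def divide_right_mono)
qed

lemma frac_dist_less_if_agree: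
  assumes "p > 1" "a \<in> Zp p" "b \<in> Zp p" "d \<in> Zp p"
    and "b \<noteq> padic_zero" "d \<noteq> padic_zero" "frac_eq p (c, d) (a, b)" "e > 0"
  obtains L where "\<And>c' d'. c' \<in> Zp p \<Longrightarrow> d' \<in> Zp p \<Longrightarrow> c' L = c L \<Longrightarrow> d' L = d L \<Longrightarrow>
    d' \<noteq> padic_zero \<and> frac_dist p (c', d') (a, b) < e"
proof -
  have norms: "padic_norm p d * padic_norm p b > 0"
    using assms(1,5,6) by (simp add: padic_norm_def)
  then have "\<forall>\<^sub>F L in sequentially. padic_val d < L \<and>
      real_of_int p powr - real L < e * (padic_norm p d * padic_norm p b)"
    using assms(1,8) by (intro eventually_conj eventually_gt_at_top eventually_powr_neg_less) simp_all
  then obtain L where "padic_val d < L"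
    and L: "real_of_int p powr - real L / (padic_norm p d * padic_norm p b) < e"
    using eventually_happens'[OF sequentially_bot] norms by (auto simp: pos_divide_less_eq)
  then show ?thesis
    using that frac_dist_le_if_agree[OF assms(1-4) _ _ assms(5-7)] by (meson order.strict_trans1)
qed

theorem lemma2p6:
  fixes p :: int and r :: nat and f :: "padic list \<Rightarrow> padic"
  assumes "prime p"
    and "\<forall>x \<in> Zp_pow p r. f x \<in> Zp p"
    and "padic_continuous p r f"
    and "\<forall>z \<in> Zp p. \<exists>x \<in> Zp_pow p r. \<exists>y \<in> Zp_pow p r.
           f y \<noteq> padic_zero \<and> frac_eq p (f x, f y) (z, padic_of_int p 1)"
  shows "dense_in_Qp p (R_set p r f)"
  unfolding dense_in_Qp_def
proof (intro ballI allI impI)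
  fix q and e :: real
  assume "q \<in> Qp_frac p" and "e > 0"
  then obtain a b where q: "q = (a, b)" "(a, b) \<in> Qp_frac p"
    by (cases q) simp
  have "p > 1"
    using assms(1) by (simp add: prime_gt_1_int)
  have "\<exists>u \<in> f ` Zp_pow p r. \<exists>v \<in> f ` Zp_pow p r. v \<noteq> padic_zero \<and> frac_eq p (u, v) (a, b)"
    using assms(1,2,4) q(2) by (intro ratios_cover_Qp_if_cover_Zp) auto
  then obtain x y where x: "x \<in> Zp_pow p r" and y: "y \<in> Zp_pow p r"
    and "f y \<noteq> padic_zero" and "frac_eq p (f x, f y) (a, b)"
    by blast
  moreover have "a \<in> Zp p" "b \<in> Zp p" "b \<noteq> padic_zero" "f y \<in> Zp p"
    using q(2) assms(2) y by (auto simp: Qp_frac_def)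
  ultimately obtain L where L: "\<And>c' d'. c' \<in> Zp p \<Longrightarrow> d' \<in> Zp p \<Longrightarrow> c' L = f x L \<Longrightarrow>
      d' L = f y L \<Longrightarrow> d' \<noteq> padic_zero \<and> frac_dist p (c', d') (a, b) < e"
    using frac_dist_less_if_agree[OF \<open>p > 1\<close> _ _ _ _ _ _ \<open>e > 0\<close>] by metis
  obtain X Y where "length X = r" "f (int_point p X) L = f x L"
    and "length Y = r" "f (int_point p Y) L = f y L"
    using continuous_agrees_at_int_point[OF \<open>p > 1\<close> assms(3,2)] x y by meson
  moreover have "f (int_point p X) \<in> Zp p" "f (int_point p Y) \<in> Zp p"
    using assms(2) int_point_in_Zp_pow[of p X] int_point_in_Zp_pow[of p Y] \<open>p > 1\<close>
      \<open>length X = r\<close> \<open>length Y = r\<close> by auto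
  ultimately show "\<exists>s \<in> R_set p r f. frac_dist p s q < e"
    using L q(1) unfolding R_set_def by blast
qed

end
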